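(* Let $\varepsilon>0$, $\rho>0$, $T\in\mathbb{N}^*$, let $w$ be a real random variable and $\mathbf{a}=(a_t)_{0\le t\le T}\in\mathbb{R}^{T+1}$ with $a_0\ne0$. Let $K>0$ be such that $|a_t|\le(K\rho)^t|a_0|$ for all $t\in\{0,\ldots,T-1\}$, $|a_T+\varepsilon|\le(K\rho)^T|a_0|$ and $|a_T-\varepsilon|\le(K\rho)^T|a_0|$. Then \[\mathbb{P}(|f(\mathbf{a},\rho w)|\ge\varepsilon)\ge\mathbb{P}(|w|\ge2K),\] where $f(\mathbf{a},\rho w)=\sum_{t=0}^Ta_{T-t}(\rho w)^t$. *)

theory Defs
  imports "HOL-Probability.Probability"
begin

definition poly_f :: "nat \<Rightarrow> (nat \<Rightarrow> real) \<Rightarrow> real \<Rightarrow> real" where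
  "poly_f T a x = (\<Sum>t = 0..T. a (T - t) * x ^ t)"

end

theory Submission
  imports Defs
begin

text \<open>
  For \<open>|y| \<ge> 2K\<rho>\<close> the growth bounds on the coefficients make the leading term \<open>a\<^sub>0 y\<^sup>T\<close> of
  \<open>f(\<^bold>a, y)\<close> strictly dominate the remaining terms, since their moduli add up to at most
  \<open>|a\<^sub>0| (|y|\<^sup>T - (K\<rho>)\<^sup>T)\<close>. The hypotheses on \<open>a\<^sub>T \<plusminus> \<epsilon>\<close> say that the same is true of the
  polynomials \<open>f(\<^bold>a, y) \<plusminus> \<epsilon>\<close>, which differ from \<open>f(\<^bold>a, y)\<close> only in the constant coefficient.
  Hence \<open>f(\<^bold>a, y) - \<epsilon>\<close> and \<open>f(\<^bold>a, y) + \<epsilon>\<close> both have the sign of \<open>a\<^sub>0 y\<^sup>T\<close>, which forces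
  \<open>|f(\<^bold>a, y)| \<ge> \<epsilon>\<close>. So the event \<open>|w| \<ge> 2K\<close> is contained in the event \<open>|f(\<^bold>a, \<rho>w)| \<ge> \<epsilon>\<close>.
\<close>

lemma sum_power_mult_power_le:
  fixes c L :: real
  assumes "c \<ge> 0" "L \<ge> 2 * c"
  shows "(\<Sum>t<T. c ^ (T - t) * L ^ t) \<le> L ^ T - c ^ T"
proof (induction T)
  case 0
  then show ?case by simp
next
  case (Suc T)
  have "(\<Sum>t<Suc T. c ^ (Suc T - t) * L ^ t) = c * (\<Sum>t<T. c ^ (T - t) * L ^ t) + c * L ^ T"
    by (simp add: sum_distrib_left Suc_diff_le mult.assoc)
  also have "\<dots> \<le> c * (L ^ T - c ^ T) + c * L ^ T"
    using Suc assms by (simp add: mult_left_mono)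
  also have "\<dots> \<le> L ^ Suc T - c ^ Suc T"
  proof -
    have "2 * c * L ^ T \<le> L * L ^ T"
      using assms by (intro mult_right_mono) auto
    then show ?thesis by (simp add: algebra_simps)
  qed
  finally show ?case .
qed

lemma abs_poly_f_minus_leading_less:
  fixes b :: "nat \<Rightarrow> real" and c x :: real
  assumes "c > 0" "\<bar>x\<bar> \<ge> 2 * c" "b 0 \<noteq> 0"
    and bound: "\<forall>j \<in> {1..T}. \<bar>b j\<bar> \<le> c ^ j * \<bar>b 0\<bar>"
  shows "\<bar>poly_f T b x - b 0 * x ^ T\<bar> < \<bar>b 0 * x ^ T\<bar>"
proof -
  have "{0..T} = insert T {..<T}" by auto
  then have "poly_f T b x - b 0 * x ^ T = (\<Sum>t<T. b (T - t) * x ^ t)"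
    unfolding poly_f_def by simp
  also have "\<bar>\<dots>\<bar> \<le> (\<Sum>t<T. \<bar>b 0\<bar> * (c ^ (T - t) * \<bar>x\<bar> ^ t))"
  proof (rule order_trans[OF sum_abs sum_mono])
    fix t assume "t \<in> {..<T}"
    then have "\<bar>b (T - t)\<bar> \<le> c ^ (T - t) * \<bar>b 0\<bar>" using bound by auto
    then have "\<bar>b (T - t)\<bar> * \<bar>x\<bar> ^ t \<le> c ^ (T - t) * \<bar>b 0\<bar> * \<bar>x\<bar> ^ t"
      by (simp add: mult_right_mono)
    then show "\<bar>b (T - t) * x ^ t\<bar> \<le> \<bar>b 0\<bar> * (c ^ (T - t) * \<bar>x\<bar> ^ t)"
      by (simp add: abs_mult power_abs algebra_simps)
  qed
  also have "\<dots> \<le> \<bar>b 0\<bar> * (\<bar>x\<bar> ^ T - c ^ T)"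
    unfolding sum_distrib_left[symmetric] using assms
    by (intro mult_left_mono sum_power_mult_power_le) auto
  also have "\<dots> < \<bar>b 0 * x ^ T\<bar>"
    using assms by (simp add: abs_mult power_abs algebra_simps)
  finally show ?thesis .
qed

lemma sgn_poly_f_eq_sgn_leading:
  fixes b :: "nat \<Rightarrow> real" and c x :: real
  assumes "c > 0" "\<bar>x\<bar> \<ge> 2 * c" "b 0 \<noteq> 0"
    and "\<forall>j \<in> {1..T}. \<bar>b j\<bar> \<le> c ^ j * \<bar>b 0\<bar>"
  shows "sgn (poly_f T b x) = sgn (b 0 * x ^ T)"
proof -
  have "sgn q = sgn p" if "\<bar>q - p\<bar> < \<bar>p\<bar>" for p q :: real
    using that by (cases p "0 :: real" rule: linorder_cases) (auto simp: sgn_real_def)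
  then show ?thesis
    using abs_poly_f_minus_leading_less[OF assms] by blast
qed

lemma poly_f_fun_upd_const:
  "poly_f T (a(T := v)) x = poly_f T a x + (v - a T)"
proof -
  have "poly_f T (a(T := v)) x = (\<Sum>t = 0..T. a (T - t) * x ^ t + (if t = 0 then v - a T else 0))"
    unfolding poly_f_def by (intro sum.cong) auto
  then show ?thesis
    unfolding poly_f_def by (simp add: sum.distrib)
qed

lemma abs_poly_f_ge:
  fixes a :: "nat \<Rightarrow> real" and c \<epsilon> y :: real
  assumes "c > 0" "T \<ge> 1" "a 0 \<noteq> 0" "\<bar>y\<bar> \<ge> 2 * c"
    and bound: "\<forall>t \<in> {1..T-1}. \<bar>a t\<bar> \<le> c ^ t * \<bar>a 0\<bar>"
    and "\<bar>a T + \<epsilon>\<bar> \<le> c ^ T * \<bar>a 0\<bar>" "\<bar>a T - \<epsilon>\<bar> \<le> c ^ T * \<bar>a 0\<bar>"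
  shows "\<epsilon> \<le> \<bar>poly_f T a y\<bar>"
proof -
  have sgn_shift: "sgn (poly_f T a y + e) = sgn (a 0 * y ^ T)"
    if "\<bar>a T + e\<bar> \<le> c ^ T * \<bar>a 0\<bar>" for e
  proof -
    let ?b = "a(T := a T + e)"
    have "\<forall>j \<in> {1..T}. \<bar>?b j\<bar> \<le> c ^ j * \<bar>?b 0\<bar>"
      using bound that \<open>T \<ge> 1\<close> by (auto simp: le_diff_conv2)
    then have "sgn (poly_f T ?b y) = sgn (?b 0 * y ^ T)"
      using assms by (intro sgn_poly_f_eq_sgn_leading) auto
    then show ?thesis
      using \<open>T \<ge> 1\<close> by (simp add: poly_f_fun_upd_const)
  qed
  have "y \<noteq> 0" using assms by auto
  then have "sgn (a 0 * y ^ T) \<noteq> 0" using assms by (simp add: sgn_eq_0_iff)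
  moreover have "sgn (poly_f T a y + \<epsilon>) = sgn (a 0 * y ^ T)"
    "sgn (poly_f T a y - \<epsilon>) = sgn (a 0 * y ^ T)"
    using sgn_shift[of \<epsilon>] sgn_shift[of "- \<epsilon>"] assms by simp_all
  ultimately show ?thesis
    by (auto simp: sgn_real_def split: if_splits)
qed

theorem mainTheorem16:
  fixes M :: "'s measure" and w :: "'s \<Rightarrow> real" and a :: "nat \<Rightarrow> real"
    and \<epsilon> \<rho> K :: real and T :: nat
  assumes "prob_space M"
    and "w \<in> borel_measurable M"
    and "\<epsilon> > 0" and "\<rho> > 0" and "T \<ge> 1"
    and "a 0 \<noteq> 0"
    and "K > 0"
    and "\<forall>t \<in> {0..T-1}. \<bar>a t\<bar> \<le> (K * \<rho>) ^ t * \<bar>a 0\<bar>"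
    and "\<bar>a T + \<epsilon>\<bar> \<le> (K * \<rho>) ^ T * \<bar>a 0\<bar>"
    and "\<bar>a T - \<epsilon>\<bar> \<le> (K * \<rho>) ^ T * \<bar>a 0\<bar>"
  shows "measure M {x \<in> space M. \<bar>poly_f T a (\<rho> * w x)\<bar> \<ge> \<epsilon>}
           \<ge> measure M {x \<in> space M. \<bar>w x\<bar> \<ge> 2 * K}"
proof -
  interpret prob_space M by fact
  have "\<epsilon> \<le> \<bar>poly_f T a (\<rho> * w x)\<bar>" if "2 * K \<le> \<bar>w x\<bar>" for x
  proof (rule abs_poly_f_ge[where c = "K * \<rho>"])
    show "\<bar>\<rho> * w x\<bar> \<ge> 2 * (K * \<rho>)"
      using that \<open>\<rho> > 0\<close> by (simp add: abs_mult mult_right_mono mult.commute mult.left_commute)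
  qed (use assms in auto)
  then have "{x \<in> space M. \<bar>w x\<bar> \<ge> 2 * K}
               \<subseteq> {x \<in> space M. \<bar>poly_f T a (\<rho> * w x)\<bar> \<ge> \<epsilon>}"
    by auto
  moreover have "{x \<in> space M. \<bar>poly_f T a (\<rho> * w x)\<bar> \<ge> \<epsilon>} \<in> sets M"
    using assms(2) unfolding poly_f_def by measurable
  ultimately show ?thesis
    by (rule finite_measure_mono)
qed

end
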